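(* Let $k\ge2$, $n\ge1$ be integers, let $\bar{\mathcal{P}}\in\mathbb{R}^{[k,n]}$ be a columnwise-substochastic tensor, $\mathbf{v}\in\mathbb{R}^n$ a stochastic vector and $\alpha\in[0,1)$. Define the tensor $\mathcal{P}\in\mathbb{R}^{[k,n]}$ by $p_{ii_2\dots i_k}:=\bar p_{ii_2\dots i_k}+v_i\left(1-\sum_{\ell=1}^n\bar p_{\ell i_2\dots i_k}\right)$. If $\mathbf{x}$ solves the MPR problem $$\mathbf{x}=\alpha\mathcal{P}\mathbf{x}^{k-1}+(1-\alpha)\mathbf{v},\quad\mathbf{x}\in\mathbb{R}^n_+,\quad\mathbf{e}^T\mathbf{x}=1,$$ then $\mathbf{y}:=\left(1-\alpha\mathbf{e}^T(\bar{\mathcal{P}}\mathbf{x}^{k-1})\right)^{-\frac{1}{k-1}}\mathbf{x}$ is a nonnegative solution of the MLPPR system $(\mathbf{e}^T\mathbf{y})^{k-2}\mathbf{y}-\alpha\bar{\mathcal{P}}\mathbf{y}^{k-1}=\mathbf{v}$.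
   Context: For $\mathcal{P}\in\mathbb{R}^{[k,n]}$ (real tensors of order $k$, dimension $n$) and $\mathbf{y}\in\mathbb{R}^n$, $(\mathcal{P}\mathbf{y}^{k-1})_i=\sum_{i_2,\dots,i_k}p_{i i_2\dots i_k}y_{i_2}\cdots y_{i_k}$. $\bar{\mathcal{P}}$ is columnwise-substochastic if its entries are nonnegative and $\sum_{i}\bar p_{i i_2\dots i_k}\le1$ for all $i_2,\dots,i_k$. $\mathbf{e}$ is the all-ones vector; a stochastic vector is nonnegative with entries summing to $1$. The tensor $\mathcal{P}$ (the "dangling correction" $\mathcal{P}=\bar{\mathcal{P}}+\mathbf{v}\circ(\mathbf{e}^{\circ(k-1)}-\bar{\mathcal{P}}\bar\times_1\mathbf{e})$) is columnwise-stochastic. *)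

theory Defs
  imports Complex_Main
begin

text \<open>Tensors of order k and dimension n are modelled as functions on index lists
  (i1, ..., ik) with entries in {0..<n}; indices are 0-based.\<close>

definition idx_tuples :: "nat \<Rightarrow> nat \<Rightarrow> nat list set" where
  "idx_tuples n m = {is. length is = m \<and> set is \<subseteq> {..<n}}"

definition tensor_apply :: "nat \<Rightarrow> nat \<Rightarrow> (nat list \<Rightarrow> real) \<Rightarrow> (nat \<Rightarrow> real) \<Rightarrow> nat \<Rightarrow> real" where
  "tensor_apply n k P y i = (\<Sum>is\<in>idx_tuples n (k - 1). P (i # is) * prod_list (map y is))"

definition col_substochastic :: "nat \<Rightarrow> nat \<Rightarrow> (nat list \<Rightarrow> real) \<Rightarrow> bool" where
  "col_substochastic n k P \<longleftrightarrow>
     (\<forall>is\<in>idx_tuples n k. 0 \<le> P is) \<and>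
     (\<forall>js\<in>idx_tuples n (k - 1). (\<Sum>i<n. P (i # js)) \<le> 1)"

definition stochastic_vec :: "nat \<Rightarrow> (nat \<Rightarrow> real) \<Rightarrow> bool" where
  "stochastic_vec n v \<longleftrightarrow> (\<forall>i<n. 0 \<le> v i) \<and> (\<Sum>i<n. v i) = 1"

end

theory Submission
  imports Defs
begin

text \<open>Because e^T x = 1, the dangling correction contributes v_i (1 - c) to (P x^(k-1))_i,
  where c = e^T (Pbar x^(k-1)) <= (e^T x)^(k-1) = 1 by substochasticity. Hence
  x = \<alpha> Pbar x^(k-1) + t v with t = 1 - \<alpha> c > 0. Both (e^T y)^(k-2) y and Pbar y^(k-1) are
  homogeneous of degree k - 1 in y, so y = s x with s^(k-1) = 1/t solves the MLPPR system.\<close>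

lemma idx_tuples_Suc:
  "idx_tuples n (Suc m) = (\<lambda>(i, is). i # is) ` ({..<n} \<times> idx_tuples n m)"
  unfolding idx_tuples_def by (auto simp: image_iff length_Suc_conv)

lemma sum_idx_tuples_prod_list:
  fixes z :: "nat \<Rightarrow> 'a::comm_semiring_1"
  shows "(\<Sum>is\<in>idx_tuples n m. prod_list (map z is)) = (\<Sum>i<n. z i) ^ m"
proof (induction m)
  case 0
  have "idx_tuples n 0 = {[]}" by (auto simp: idx_tuples_def)
  then show ?case by simp
next
  case (Suc m)
  have inj: "inj_on (\<lambda>(i, is). i # is) ({..<n} \<times> idx_tuples n m)"
    by (auto simp: inj_on_def)
  have "(\<Sum>is\<in>idx_tuples n (Suc m). prod_list (map z is))
      = (\<Sum>(i, is)\<in>{..<n} \<times> idx_tuples n m. z i * prod_list (map z is))"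
    unfolding idx_tuples_Suc by (subst sum.reindex[OF inj]) (auto intro!: sum.cong)
  also have "\<dots> = (\<Sum>i<n. z i) * (\<Sum>is\<in>idx_tuples n m. prod_list (map z is))"
    by (simp add: sum.cartesian_product[symmetric] sum_product)
  finally show ?case using Suc by simp
qed

lemma prod_list_map_scale:
  fixes s :: "'a::comm_monoid_mult"
  shows "prod_list (map (\<lambda>i. s * x i) is) = s ^ length is * prod_list (map x is)"
  by (induction "is") (simp_all add: mult_ac)

lemma tensor_apply_scale:
  "tensor_apply n k Q (\<lambda>i. s * x i) j = s ^ (k - 1) * tensor_apply n k Q x j"
  unfolding tensor_apply_def sum_distrib_left
  by (rule sum.cong) (auto simp: prod_list_map_scale idx_tuples_def)

lemma sum_tensor_apply:
  "(\<Sum>j<n. tensor_apply n k Q x j)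
     = (\<Sum>is\<in>idx_tuples n (k - 1). (\<Sum>j<n. Q (j # is)) * prod_list (map x is))"
  unfolding tensor_apply_def by (subst sum.swap) (simp add: sum_distrib_right)

lemma sum_tensor_apply_le_power_sum:
  assumes "col_substochastic n k Q" and x_nonneg: "\<forall>i<n. 0 \<le> x i"
  shows "(\<Sum>j<n. tensor_apply n k Q x j) \<le> (\<Sum>i<n. x i) ^ (k - 1)"
  unfolding sum_tensor_apply sum_idx_tuples_prod_list[symmetric]
proof (rule sum_mono)
  fix js assume js: "js \<in> idx_tuples n (k - 1)"
  then have "(\<Sum>j<n. Q (j # js)) \<le> 1"
    using assms(1) by (simp add: col_substochastic_def)
  moreover have "0 \<le> prod_list (map x js)"
    using js x_nonneg by (auto simp: idx_tuples_def subset_iff intro!: prod_list_nonneg)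
  ultimately show "(\<Sum>j<n. Q (j # js)) * prod_list (map x js) \<le> prod_list (map x js)"
    using mult_right_mono by fastforce
qed

lemma tensor_apply_dangling_correction:
  "tensor_apply n k (\<lambda>is. Q is + v (hd is) * (1 - (\<Sum>l<n. Q (l # tl is)))) x i
     = tensor_apply n k Q x i
       + v i * ((\<Sum>j<n. x j) ^ (k - 1) - (\<Sum>j<n. tensor_apply n k Q x j))"
  unfolding sum_tensor_apply sum_idx_tuples_prod_list[symmetric]
  unfolding tensor_apply_def
  by (simp add: algebra_simps sum.distrib sum_distrib_left sum_subtractf)

lemma powr_minus_inverse_power:
  fixes t :: real
  assumes "0 < t" and "m \<noteq> 0"
  shows "(t powr (- 1 / real m)) ^ m = inverse t"
proof -
  have "(t powr (- 1 / real m)) ^ m = t powr (- 1 / real m * real m)"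
    using assms(1) by (simp add: powr_realpow[symmetric] powr_powr)
  also have "\<dots> = inverse t"
    using assms by (simp add: powr_minus)
  finally show ?thesis .
qed

lemma scaled_solution_of_homogeneous_equation:
  assumes "k \<ge> 2" and "(\<Sum>j<n. x j) = 1" and "s ^ (k - 1) * t = 1"
    and "x i = \<alpha> * tensor_apply n k Q x i + t * v i"
  shows "(\<Sum>j<n. s * x j) ^ (k - 2) * (s * x i) - \<alpha> * tensor_apply n k Q (\<lambda>j. s * x j) i = v i"
proof -
  have "k - 1 = Suc (k - 2)"
    using assms(1) by simp
  then have "(\<Sum>j<n. s * x j) ^ (k - 2) * (s * x i) = s ^ (k - 1) * x i"
    using assms(2) by (simp add: sum_distrib_left[symmetric] mult.assoc mult.commute)
  then have "(\<Sum>j<n. s * x j) ^ (k - 2) * (s * x i) - \<alpha> * tensor_apply n k Q (\<lambda>j. s * x j) i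
      = s ^ (k - 1) * (x i - \<alpha> * tensor_apply n k Q x i)"
    by (simp add: tensor_apply_scale algebra_simps)
  also have "\<dots> = v i"
    using assms(3,4) by (simp add: algebra_simps)
  finally show ?thesis .
qed

theorem lemma3p13:
  fixes k n :: nat and Pbar P :: "nat list \<Rightarrow> real" and v x y :: "nat \<Rightarrow> real" and \<alpha> :: real
  assumes "k \<ge> 2" and "n \<ge> 1"
    and "col_substochastic n k Pbar"
    and "stochastic_vec n v"
    and "0 \<le> \<alpha>" and "\<alpha> < 1"
    and P_def: "P = (\<lambda>is. Pbar is + v (hd is) * (1 - (\<Sum>l<n. Pbar (l # tl is))))"
    and x_sol: "\<forall>i<n. x i = \<alpha> * tensor_apply n k P x i + (1 - \<alpha>) * v i"
    and x_nonneg: "\<forall>i<n. 0 \<le> x i"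
    and x_sum: "(\<Sum>i<n. x i) = 1"
    and y_def: "y = (\<lambda>i. (1 - \<alpha> * (\<Sum>j<n. tensor_apply n k Pbar x j)) powr (- 1 / real (k - 1)) * x i)"
  shows "(\<forall>i<n. 0 \<le> y i) \<and>
         (\<forall>i<n. (\<Sum>j<n. y j) ^ (k - 2) * y i - \<alpha> * tensor_apply n k Pbar y i = v i)"
proof -
  define c where "c = (\<Sum>j<n. tensor_apply n k Pbar x j)"
  define t where "t = 1 - \<alpha> * c"
  define s where "s = t powr (- 1 / real (k - 1))"
  have "c \<le> 1"
    using sum_tensor_apply_le_power_sum[OF assms(3) x_nonneg] by (simp add: c_def x_sum)
  then have "0 < t"
    using assms(5,6) mult_left_mono[of c 1 \<alpha>] by (simp add: t_def)
  then have "s ^ (k - 1) * t = 1" and "0 < s"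
    using assms(1) powr_minus_inverse_power[of t "k - 1"] by (simp_all add: s_def)
  have x_eq: "x i = \<alpha> * tensor_apply n k Pbar x i + t * v i" if "i < n" for i
    using x_sol that unfolding P_def tensor_apply_dangling_correction
    by (simp add: x_sum c_def t_def algebra_simps)
  have "y = (\<lambda>i. s * x i)"
    by (simp add: y_def s_def t_def c_def)
  moreover have "(\<Sum>j<n. s * x j) ^ (k - 2) * (s * x i)
      - \<alpha> * tensor_apply n k Pbar (\<lambda>j. s * x j) i = v i" if "i < n" for i
    using assms(1) x_sum \<open>s ^ (k - 1) * t = 1\<close> x_eq[OF that]
    by (rule scaled_solution_of_homogeneous_equation)
  ultimately show ?thesis
    using x_nonneg \<open>0 < s\<close> by simp
qed

end
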